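(* Let $M\ge2$ and let $\mathcal{P}$ be a Class II source set on $\{1,\dots,M\}$ with $P_1\ge P_2\ge\dots\ge P_M$ for every $P\in\mathcal{P}$, and let $D^{(M-1)}=\sup_{P\in\mathcal{P}}\sum_{i=2}^{M}P_i$. Then for $D\in[0,1]$, $\epsilon^*_{\mathrm{IT}}(\mathcal{P},D)=0$ if and only if $D\ge D^{(M-1)}$.
   Context: A source set is a nonempty set $\mathcal{P}$ of probability distributions on $\{1,\dots,M\}$; Class I means its convex hull contains the uniform distribution; Class II means it is not Class I and a single permutation orders all its distributions decreasingly. A mechanism is an $M\times M$ row-stochastic matrix $Q$ with entries $Q(j|i)$; its diagonal distortions are $D_i=1-Q(i|i)$. $Q$ is $(\mathcal{P},D)$-valid if $\sum_iP_iD_i\le D$ for all $P\in\mathcal{P}$; $\mathcal{Q}(\mathcal{P},D)$ is the set of these. $I(P;Q)$ is the mutual information $I(X;\hat X)$ for $X\sim P$, $\hat X\sim Q(\cdot|X)$; $\epsilon^*_{\mathrm{IT}}(\mathcal{P},D)=\min_{Q\in\mathcal{Q}(\mathcal{P},D)}\max_{P\in\mathcal{P}}I(P;Q)$. *)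

theory Defs
  imports Complex_Main "HOL-Combinatorics.Permutations"
begin

text \<open>Distributions on the alphabet {1..M} are functions nat => real, only values
  on {1..M} matter. A mechanism Q :: nat => nat => real with Q i j = Q(j|i).\<close>

definition is_dist :: "nat \<Rightarrow> (nat \<Rightarrow> real) \<Rightarrow> bool" where
  "is_dist M P \<longleftrightarrow> (\<forall>i\<in>{1..M}. 0 \<le> P i) \<and> (\<Sum>i=1..M. P i) = 1"

definition source_set :: "nat \<Rightarrow> (nat \<Rightarrow> real) set \<Rightarrow> bool" where
  "source_set M \<P> \<longleftrightarrow> \<P> \<noteq> {} \<and> (\<forall>P\<in>\<P>. is_dist M P)"

definition class_I :: "nat \<Rightarrow> (nat \<Rightarrow> real) set \<Rightarrow> bool" where
  "class_I M \<P> \<longleftrightarrow> (\<exists>S w. finite S \<and> S \<subseteq> \<P> \<and> (\<forall>P\<in>S. 0 \<le> w P) \<and> (\<Sum>P\<in>S. w P) = 1 \<and>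
      (\<forall>i\<in>{1..M}. (\<Sum>P\<in>S. w P * P i) = 1 / real M))"

definition class_II :: "nat \<Rightarrow> (nat \<Rightarrow> real) set \<Rightarrow> bool" where
  "class_II M \<P> \<longleftrightarrow> \<not> class_I M \<P> \<and>
     (\<exists>\<sigma>. \<sigma> permutes {1..M} \<and>
        (\<forall>P\<in>\<P>. \<forall>i j. 1 \<le> i \<and> i \<le> j \<and> j \<le> M \<longrightarrow> P (\<sigma> j) \<le> P (\<sigma> i)))"

definition mechanism :: "nat \<Rightarrow> (nat \<Rightarrow> nat \<Rightarrow> real) \<Rightarrow> bool" where
  "mechanism M Q \<longleftrightarrow> (\<forall>i\<in>{1..M}. (\<forall>j\<in>{1..M}. 0 \<le> Q i j) \<and> (\<Sum>j=1..M. Q i j) = 1)"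

definition valid_mech :: "nat \<Rightarrow> (nat \<Rightarrow> real) set \<Rightarrow> real \<Rightarrow> (nat \<Rightarrow> nat \<Rightarrow> real) \<Rightarrow> bool" where
  "valid_mech M \<P> D Q \<longleftrightarrow> mechanism M Q \<and>
     (\<forall>P\<in>\<P>. (\<Sum>i=1..M. P i * (1 - Q i i)) \<le> D)"

definition mutual_info :: "nat \<Rightarrow> (nat \<Rightarrow> real) \<Rightarrow> (nat \<Rightarrow> nat \<Rightarrow> real) \<Rightarrow> real" where
  "mutual_info M P Q = (\<Sum>i=1..M. \<Sum>j=1..M.
      (if P i * Q i j = 0 then 0
       else P i * Q i j * ln (Q i j / (\<Sum>k=1..M. P k * Q k j))))"

definition eps_IT :: "nat \<Rightarrow> (nat \<Rightarrow> real) set \<Rightarrow> real \<Rightarrow> real" where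
  "eps_IT M \<P> D = (INF Q\<in>{Q. valid_mech M \<P> D Q}. (SUP P\<in>\<P>. mutual_info M P Q))"

end

theory Submission
  imports Defs
begin

text \<open>If \<open>D\<close> is at least every tail mass \<open>\<Sum>\<^sub>i\<^sub>\<ge>\<^sub>2 P\<^sub>i\<close>, the mechanism that always outputs
  the most likely letter 1 is valid and leaks nothing. Conversely, write the mutual information as a
  sum of generalized Kullback--Leibler terms \<open>q ln (q/r) - q + r\<close>; each dominates a squared Hellinger
  distance and hence \<open>(q - r)\<^sup>2/4\<close>, so \<open>I(P;Q) \<ge> \<Sum>\<^sub>i P\<^sub>i (Q(i|i) - r\<^sub>i)\<^sup>2 / 4\<close> with \<open>r\<close> the output
  distribution. Since \<open>P\<^sub>1\<close> is the largest mass, \<open>\<Sum>\<^sub>i P\<^sub>i r\<^sub>i \<le> P\<^sub>1\<close>, while validity gives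
  \<open>\<Sum>\<^sub>i P\<^sub>i Q(i|i) \<ge> 1 - D\<close>; so the \<open>P\<close>-mean of \<open>Q(i|i) - r\<^sub>i\<close> is at least \<open>\<Sum>\<^sub>i\<^sub>\<ge>\<^sub>2 P\<^sub>i - D\<close>,
  and by Jensen every valid mechanism leaks at least \<open>(\<Sum>\<^sub>i\<^sub>\<ge>\<^sub>2 P\<^sub>i - D)\<^sup>2/4\<close> on \<open>P\<close>.\<close>

definition output_prob :: "nat \<Rightarrow> (nat \<Rightarrow> real) \<Rightarrow> (nat \<Rightarrow> nat \<Rightarrow> real) \<Rightarrow> nat \<Rightarrow> real" where
  "output_prob M P Q j = (\<Sum>k=1..M. P k * Q k j)"

lemma sum_split_first:
  fixes f :: "nat \<Rightarrow> 'a::comm_monoid_add"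
  assumes "1 \<le> M"
  shows "(\<Sum>i=1..M. f i) = f 1 + (\<Sum>i=2..M. f i)"
  using sum.atLeast_Suc_atMost[OF assms, of f] by (simp add: numeral_2_eq_2)

lemma is_dist_le_one:
  assumes "is_dist M P" "i \<in> {1..M}"
  shows "P i \<le> 1"
proof -
  have "P i \<le> (\<Sum>i=1..M. P i)"
    by (rule member_le_sum) (use assms in \<open>auto simp: is_dist_def\<close>)
  thus ?thesis using assms by (simp add: is_dist_def)
qed

lemma is_dist_mechanism_row:
  assumes "mechanism M Q" "i \<in> {1..M}"
  shows "is_dist M (Q i)"
  using assms by (simp add: mechanism_def is_dist_def)

lemma is_dist_output_prob:
  assumes "is_dist M P" "mechanism M Q"
  shows "is_dist M (output_prob M P Q)"
proof -
  have "(\<Sum>j=1..M. output_prob M P Q j) = (\<Sum>k=1..M. P k * (\<Sum>j=1..M. Q k j))"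
    unfolding output_prob_def by (subst sum.swap) (simp add: sum_distrib_left)
  also have "\<dots> = 1" using assms by (simp add: mechanism_def is_dist_def)
  finally show ?thesis
    using assms by (auto simp: is_dist_def mechanism_def output_prob_def intro!: sum_nonneg)
qed

lemma output_prob_ge:
  assumes "is_dist M P" "mechanism M Q" "i \<in> {1..M}" "j \<in> {1..M}"
  shows "P i * Q i j \<le> output_prob M P Q j"
  unfolding output_prob_def
  by (rule member_le_sum[where f = "\<lambda>k. P k * Q k j"])
     (use assms in \<open>auto simp: mechanism_def is_dist_def\<close>)

lemma output_prob_pos:
  assumes "is_dist M P" "mechanism M Q" "i \<in> {1..M}" "j \<in> {1..M}" "P i * Q i j \<noteq> 0"
  shows "0 < output_prob M P Q j"
proof -
  have "0 \<le> P i * Q i j" using assms by (auto simp: mechanism_def is_dist_def)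
  with output_prob_ge[OF assms(1-4)] assms(5) show ?thesis by linarith
qed

text \<open>A summand of the generalized Kullback--Leibler divergence; unlike \<open>q ln (q/r)\<close> it is
  nonnegative term by term.\<close>
definition kl_term :: "real \<Rightarrow> real \<Rightarrow> real" where
  "kl_term q r = (if q = 0 then r else q * ln (q / r) - q + r)"

lemma hellinger_le_kl_term:
  assumes "0 \<le> q" "0 \<le> r" "q \<noteq> 0 \<Longrightarrow> 0 < r"
  shows "(sqrt q - sqrt r)\<^sup>2 \<le> kl_term q r"
proof (cases "q = 0")
  case True
  thus ?thesis using assms by (simp add: kl_term_def power2_eq_square)
next
  case False
  hence q: "q > 0" and r: "r > 0" using assms by auto
  have "ln (sqrt r / sqrt q) \<le> sqrt r / sqrt q - 1" by (rule ln_le_minus_one) (use q r in auto)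
  moreover have "ln (q / r) = - 2 * ln (sqrt r / sqrt q)"
    using q r by (simp add: ln_div ln_sqrt)
  ultimately have "q * (2 - 2 * sqrt r / sqrt q) \<le> q * ln (q / r)"
    using q by (intro mult_left_mono) auto
  also have "q * (2 - 2 * sqrt r / sqrt q) = 2 * q - 2 * sqrt q * sqrt r"
    using q by (simp add: field_simps)
  finally have "2 * q - 2 * sqrt q * sqrt r \<le> q * ln (q / r)" .
  moreover have "(sqrt q - sqrt r)\<^sup>2 = q + r - 2 * sqrt q * sqrt r"
    using q r by (simp add: power2_eq_square algebra_simps)
  ultimately show ?thesis using False by (simp add: kl_term_def)
qed

lemma sq_diff_le_kl_term:
  assumes "0 \<le> q" "q \<le> 1" "0 \<le> r" "r \<le> 1" "q \<noteq> 0 \<Longrightarrow> 0 < r"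
  shows "(q - r)\<^sup>2 \<le> 4 * kl_term q r"
proof -
  have "sqrt q + sqrt r \<le> 2" using assms by (smt (verit) real_sqrt_le_1_iff)
  hence "(sqrt q + sqrt r)\<^sup>2 \<le> 2\<^sup>2" using assms by (intro power_mono) auto
  hence "(sqrt q - sqrt r)\<^sup>2 * (sqrt q + sqrt r)\<^sup>2 \<le> (sqrt q - sqrt r)\<^sup>2 * 4"
    by (intro mult_left_mono) simp_all
  moreover have "(q - r)\<^sup>2 = (sqrt q - sqrt r)\<^sup>2 * (sqrt q + sqrt r)\<^sup>2"
    using assms by (simp add: power_mult_distrib[symmetric] algebra_simps)
  ultimately show ?thesis using hellinger_le_kl_term[OF assms(1,3,5)] by linarith
qed

lemma mutual_info_eq_sum_kl_term:
  assumes "is_dist M P" "mechanism M Q"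
  shows "mutual_info M P Q = (\<Sum>i=1..M. \<Sum>j=1..M. P i * kl_term (Q i j) (output_prob M P Q j))"
proof -
  let ?r = "output_prob M P Q"
  have summand: "(if P i * Q i j = 0 then 0 else P i * Q i j * ln (Q i j / ?r j))
      = P i * kl_term (Q i j) (?r j) + P i * Q i j - P i * ?r j" for i j
    by (auto simp: kl_term_def algebra_simps)
  have "mutual_info M P Q
      = (\<Sum>i=1..M. \<Sum>j=1..M. P i * kl_term (Q i j) (?r j))
        + (\<Sum>i=1..M. P i * (\<Sum>j=1..M. Q i j)) - (\<Sum>i=1..M. P i * (\<Sum>j=1..M. ?r j))"
    unfolding mutual_info_def output_prob_def[symmetric] summand
    by (simp add: sum.distrib sum_subtractf sum_distrib_left)
  moreover have "(\<Sum>i=1..M. P i * (\<Sum>j=1..M. Q i j)) = 1"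
    using assms by (simp add: mechanism_def is_dist_def)
  moreover have "(\<Sum>i=1..M. P i * (\<Sum>j=1..M. ?r j)) = 1"
    using assms is_dist_output_prob[OF assms] by (simp add: is_dist_def)
  ultimately show ?thesis by simp
qed

lemma sq_diff_output_prob_le_kl_term:
  assumes "is_dist M P" "mechanism M Q" "i \<in> {1..M}" "j \<in> {1..M}"
  shows "P i * (Q i j - output_prob M P Q j)\<^sup>2 \<le> 4 * (P i * kl_term (Q i j) (output_prob M P Q j))"
proof (cases "P i = 0")
  case False
  have "(Q i j - output_prob M P Q j)\<^sup>2 \<le> 4 * kl_term (Q i j) (output_prob M P Q j)"
    using is_dist_mechanism_row[OF assms(2,3)] is_dist_output_prob[OF assms(1,2)] assms(4)
      output_prob_pos[OF assms] False
    by (intro sq_diff_le_kl_term) (auto simp: is_dist_def intro: is_dist_le_one)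
  hence "P i * (Q i j - output_prob M P Q j)\<^sup>2 \<le> P i * (4 * kl_term (Q i j) (output_prob M P Q j))"
    using assms by (intro mult_left_mono) (auto simp: is_dist_def)
  thus ?thesis by (simp add: algebra_simps)
qed simp

lemma diag_deviation_le_mutual_info:
  assumes "is_dist M P" "mechanism M Q"
  shows "(\<Sum>i=1..M. P i * (Q i i - output_prob M P Q i)\<^sup>2) \<le> 4 * mutual_info M P Q"
proof -
  let ?k = "\<lambda>i j. P i * kl_term (Q i j) (output_prob M P Q j)"
  have k_nonneg: "0 \<le> ?k i j" if "i \<in> {1..M}" "j \<in> {1..M}" for i j
  proof -
    have "0 \<le> P i * (Q i j - output_prob M P Q j)\<^sup>2" using assms(1) that by (simp add: is_dist_def)
    with sq_diff_output_prob_le_kl_term[OF assms that] show ?thesis by linarith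
  qed
  have "(\<Sum>i=1..M. P i * (Q i i - output_prob M P Q i)\<^sup>2) \<le> (\<Sum>i=1..M. 4 * ?k i i)"
    by (intro sum_mono sq_diff_output_prob_le_kl_term[OF assms]) auto
  also have "\<dots> \<le> (\<Sum>i=1..M. 4 * (\<Sum>j=1..M. ?k i j))"
    by (intro sum_mono mult_left_mono member_le_sum) (use k_nonneg in auto)
  finally show ?thesis by (simp add: mutual_info_eq_sum_kl_term[OF assms] sum_distrib_left)
qed

lemma mutual_info_nonneg:
  assumes "is_dist M P" "mechanism M Q"
  shows "0 \<le> mutual_info M P Q"
proof -
  have "0 \<le> (\<Sum>i=1..M. P i * (Q i i - output_prob M P Q i)\<^sup>2)"
    using assms(1) by (intro sum_nonneg) (simp add: is_dist_def)
  with diag_deviation_le_mutual_info[OF assms] show ?thesis by linarith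
qed

lemma mutual_info_le_card:
  assumes "is_dist M P" "mechanism M Q"
  shows "mutual_info M P Q \<le> real M"
proof -
  have summand_le: "(if P i * Q i j = 0 then 0 else P i * Q i j * ln (Q i j / output_prob M P Q j))
      \<le> Q i j" if ij: "i \<in> {1..M}" "j \<in> {1..M}" for i j
  proof (cases "P i * Q i j = 0")
    case True
    thus ?thesis using assms ij by (simp add: mechanism_def)
  next
    case False
    let ?r = "output_prob M P Q j"
    have r: "0 < ?r" by (rule output_prob_pos[OF assms ij False])
    have PQ: "0 < P i" "0 < Q i j"
      using False assms ij by (auto simp: is_dist_def mechanism_def less_le)
    have "ln (Q i j / ?r) \<le> Q i j / ?r" using ln_le_minus_one[of "Q i j / ?r"] r PQ by simp
    hence "P i * Q i j * ln (Q i j / ?r) \<le> P i * Q i j * (Q i j / ?r)"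
      using PQ by (intro mult_left_mono) auto
    also have "\<dots> = P i * Q i j / ?r * Q i j" by simp
    also have "\<dots> \<le> 1 * Q i j"
      using output_prob_ge[OF assms ij] r PQ by (intro mult_right_mono) auto
    finally show ?thesis using False by simp
  qed
  have "mutual_info M P Q \<le> (\<Sum>i=1..M. \<Sum>j=1..M. Q i j)"
    unfolding mutual_info_def by (intro sum_mono summand_le[unfolded output_prob_def]) auto
  also have "\<dots> = real M" using assms by (simp add: mechanism_def)
  finally show ?thesis .
qed

lemma mutual_info_const_rows:
  assumes "is_dist M P"
  shows "mutual_info M P (\<lambda>i. q) = 0"
proof -
  have output_eq: "(\<Sum>k=1..M. P k * q j) = q j" for j
    using assms by (simp add: is_dist_def flip: sum_distrib_right)
  show ?thesis unfolding mutual_info_def output_eq by (auto intro!: sum.neutral)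
qed

lemma sq_weighted_sum_le:
  fixes w d :: "'a \<Rightarrow> real"
  assumes "\<forall>i\<in>A. 0 \<le> w i" "sum w A = 1"
  shows "(\<Sum>i\<in>A. w i * d i)\<^sup>2 \<le> (\<Sum>i\<in>A. w i * (d i)\<^sup>2)"
proof -
  let ?m = "\<Sum>i\<in>A. w i * d i"
  have "0 \<le> (\<Sum>i\<in>A. w i * (d i - ?m)\<^sup>2)"
    using assms(1) by (intro sum_nonneg) simp
  also have "\<dots> = (\<Sum>i\<in>A. w i * (d i)\<^sup>2) - 2 * ?m * ?m + ?m\<^sup>2 * sum w A"
    by (simp add: power2_diff algebra_simps sum.distrib sum_subtractf
        sum_distrib_left sum_distrib_right)
  finally show ?thesis using assms(2) by (simp add: power2_eq_square)
qed

lemma tail_minus_distortion_le: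
  assumes "is_dist M P" "mechanism M Q" "1 \<le> M" "\<forall>i\<in>{1..M}. P i \<le> P 1"
  shows "(\<Sum>i=2..M. P i) - (\<Sum>i=1..M. P i * (1 - Q i i))
    \<le> (\<Sum>i=1..M. P i * (Q i i - output_prob M P Q i))"
proof -
  let ?r = "output_prob M P Q"
  have "(\<Sum>i=1..M. P i * ?r i) \<le> (\<Sum>i=1..M. P 1 * ?r i)"
    using assms(4) is_dist_output_prob[OF assms(1,2)]
    by (intro sum_mono mult_right_mono) (auto simp: is_dist_def)
  also have "\<dots> = P 1"
    using is_dist_output_prob[OF assms(1,2)] by (simp add: is_dist_def flip: sum_distrib_left)
  finally have "(\<Sum>i=1..M. P i * ?r i) \<le> P 1" .
  moreover have "(\<Sum>i=1..M. P i) = P 1 + (\<Sum>i=2..M. P i)"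
    by (rule sum_split_first[OF assms(3)])
  ultimately show ?thesis
    using assms(1) by (simp add: is_dist_def algebra_simps sum_subtractf)
qed

lemma distortion_gap_le_mutual_info:
  assumes "is_dist M P" "mechanism M Q" "1 \<le> M" "\<forall>i\<in>{1..M}. P i \<le> P 1"
    and "(\<Sum>i=1..M. P i * (1 - Q i i)) \<le> D" "D \<le> (\<Sum>i=2..M. P i)"
  shows "((\<Sum>i=2..M. P i) - D)\<^sup>2 \<le> 4 * mutual_info M P Q"
proof -
  let ?d = "\<lambda>i. Q i i - output_prob M P Q i"
  have "((\<Sum>i=2..M. P i) - D)\<^sup>2 \<le> (\<Sum>i=1..M. P i * ?d i)\<^sup>2"
    using tail_minus_distortion_le[OF assms(1-4)] assms(5,6) by (intro power_mono) auto
  also have "\<dots> \<le> (\<Sum>i=1..M. P i * (?d i)\<^sup>2)"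
    using assms(1) by (intro sq_weighted_sum_le) (auto simp: is_dist_def)
  also have "\<dots> \<le> 4 * mutual_info M P Q"
    by (rule diag_deviation_le_mutual_info[OF assms(1,2)])
  finally show ?thesis .
qed

lemma distortion_output_first:
  fixes P :: "nat \<Rightarrow> real"
  assumes "1 \<le> M"
  shows "(\<Sum>i=1..M. P i * (1 - (if i = 1 then 1 else 0))) = (\<Sum>i=2..M. P i)"
  using sum_split_first[OF assms, of "\<lambda>i. P i * (1 - (if i = 1 then 1 else 0))"] by simp

lemma tail_le_one:
  assumes "is_dist M P"
  shows "(\<Sum>i=2..M. P i) \<le> 1"
proof -
  have "(\<Sum>i=2..M. P i) \<le> (\<Sum>i=1..M. P i)"
    by (rule sum_mono2) (use assms in \<open>auto simp: is_dist_def\<close>)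
  thus ?thesis using assms by (simp add: is_dist_def)
qed

lemma bdd_above_mutual_info:
  assumes "source_set M \<P>" "mechanism M Q"
  shows "bdd_above ((\<lambda>P. mutual_info M P Q) ` \<P>)"
  using assms mutual_info_le_card by (intro bdd_aboveI[where M = "real M"]) (auto simp: source_set_def)

lemma mutual_info_le_SUP:
  assumes "source_set M \<P>" "mechanism M Q" "P \<in> \<P>"
  shows "mutual_info M P Q \<le> (SUP P\<in>\<P>. mutual_info M P Q)"
  by (rule cSUP_upper[OF assms(3) bdd_above_mutual_info[OF assms(1,2)]])

lemma SUP_mutual_info_nonneg:
  assumes "source_set M \<P>" "mechanism M Q"
  shows "0 \<le> (SUP P\<in>\<P>. mutual_info M P Q)"
proof -
  obtain P where "P \<in> \<P>" using assms(1) by (auto simp: source_set_def)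
  thus ?thesis using assms mutual_info_nonneg mutual_info_le_SUP
    by (meson order_trans source_set_def)
qed

lemma eps_IT_le:
  assumes "source_set M \<P>" "valid_mech M \<P> D Q"
  shows "eps_IT M \<P> D \<le> (SUP P\<in>\<P>. mutual_info M P Q)"
  unfolding eps_IT_def
  using assms SUP_mutual_info_nonneg
  by (intro cINF_lower bdd_belowI[where m = 0]) (auto simp: valid_mech_def)

lemma eps_IT_ge:
  assumes "source_set M \<P>" "valid_mech M \<P> D Q0"
    and "\<And>Q. valid_mech M \<P> D Q \<Longrightarrow> \<exists>P\<in>\<P>. c \<le> mutual_info M P Q"
  shows "c \<le> eps_IT M \<P> D"
  unfolding eps_IT_def
proof (rule cINF_greatest)
  fix Q assume "Q \<in> {Q. valid_mech M \<P> D Q}"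
  with assms(1,3) show "c \<le> (SUP P\<in>\<P>. mutual_info M P Q)"
    using mutual_info_le_SUP by (fastforce simp: valid_mech_def intro: order_trans)
qed (use assms(2) in auto)

lemma eps_IT_eq_zero_if_tails_le:
  assumes "source_set M \<P>" "1 \<le> M" "\<forall>P\<in>\<P>. (\<Sum>i=2..M. P i) \<le> D"
  shows "eps_IT M \<P> D = 0"
proof -
  let ?Q = "\<lambda>i j. if j = 1 then 1 else 0 :: real"
  have valid: "valid_mech M \<P> D ?Q"
    using assms(2,3) distortion_output_first[of M] by (simp add: valid_mech_def mechanism_def)
  have "(SUP P\<in>\<P>. mutual_info M P ?Q) = 0"
    using assms(1) mutual_info_const_rows by (simp add: source_set_def)
  with valid show ?thesis
    using eps_IT_le[OF assms(1) valid] eps_IT_ge[OF assms(1) valid, of 0]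
      mutual_info_nonneg assms(1) by (force simp: valid_mech_def source_set_def)
qed

lemma eps_IT_pos_if_tail_gt:
  assumes "source_set M \<P>" "1 \<le> M" "0 \<le> D" "\<forall>P\<in>\<P>. \<forall>i\<in>{1..M}. P i \<le> P 1"
    and "P0 \<in> \<P>" "D < (\<Sum>i=2..M. P0 i)"
  shows "0 < eps_IT M \<P> D"
proof -
  have "valid_mech M \<P> D (\<lambda>i j. if i = j then 1 else 0)"
    using assms(3) by (simp add: valid_mech_def mechanism_def)
  moreover have "\<exists>P\<in>\<P>. ((\<Sum>i=2..M. P0 i) - D)\<^sup>2 / 4 \<le> mutual_info M P Q"
    if "valid_mech M \<P> D Q" for Q
  proof
    show "((\<Sum>i=2..M. P0 i) - D)\<^sup>2 / 4 \<le> mutual_info M P0 Q"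
      using that assms distortion_gap_le_mutual_info[of M P0 Q D]
      by (auto simp: valid_mech_def source_set_def)
  qed (rule assms(5))
  ultimately have "((\<Sum>i=2..M. P0 i) - D)\<^sup>2 / 4 \<le> eps_IT M \<P> D"
    by (rule eps_IT_ge[OF assms(1)])
  moreover have "0 < ((\<Sum>i=2..M. P0 i) - D)\<^sup>2 / 4" using assms(6) by simp
  ultimately show ?thesis by linarith
qed

theorem lemma4:
  fixes M :: nat and \<P> :: "(nat \<Rightarrow> real) set" and D :: real
  assumes "M \<ge> 2"
    and "source_set M \<P>"
    and "class_II M \<P>"
    and "\<forall>P\<in>\<P>. \<forall>i j. 1 \<le> i \<and> i \<le> j \<and> j \<le> M \<longrightarrow> P j \<le> P i"
    and "0 \<le> D" and "D \<le> 1"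
  shows "eps_IT M \<P> D = 0 \<longleftrightarrow> D \<ge> (SUP P\<in>\<P>. \<Sum>i=2..M. P i)"
proof -
  have bdd: "bdd_above ((\<lambda>P. \<Sum>i=2..M. P i) ` \<P>)"
    using assms(2) tail_le_one by (intro bdd_aboveI[where M = 1]) (auto simp: source_set_def)
  show ?thesis
  proof (cases "D \<ge> (SUP P\<in>\<P>. \<Sum>i=2..M. P i)")
    case True
    hence "\<forall>P\<in>\<P>. (\<Sum>i=2..M. P i) \<le> D" by (auto intro: order_trans[OF cSUP_upper[OF _ bdd]])
    with True show ?thesis using assms(1,2) eps_IT_eq_zero_if_tails_le by simp
  next
    case False
    moreover have "\<P> \<noteq> {}" using assms(2) by (simp add: source_set_def)
    ultimately obtain P0 where "P0 \<in> \<P>" "D < (\<Sum>i=2..M. P0 i)"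
      using less_cSUP_iff[OF _ bdd] by (metis not_le)
    moreover have "\<forall>P\<in>\<P>. \<forall>i\<in>{1..M}. P i \<le> P 1" using assms(4) by auto
    ultimately have "0 < eps_IT M \<P> D"
      using assms(1,2,5) by (intro eps_IT_pos_if_tail_gt) auto
    with False show ?thesis by simp
  qed
qed

end
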